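(* Let $p$ be a positive integer, let $J_1,\dots,J_p\in\mathcal{D}(X)$, and let $\ell_1,\dots,\ell_p$ be positive integers. Let $\ell=\min_i\ell_i$, $\bar J_i=T^{\ell_i-\ell}J_i$ for $i=1,\dots,p$, and $\bar J(x)=\min_{i=1,\dots,p}\bar J_i(x)$ for all $x\in X$. Then $\bar J\in\mathcal{D}(X)$.
   Context: Setting: $X$ (state space) and $U$ (control space) are sets; for each $x\in X$, $U(x)\subset U$ is nonempty; $f:X\times U\to X$; the stage cost $g$ satisfies $0\le g(x,u)\le\infty$ for all $x\in X$, $u\in U(x)$. $\mathcal{E}^+(X)$ denotes the set of all functions $J:X\to[0,\infty]$. The Bellman operator $T:\mathcal{E}^+(X)\to\mathcal{E}^+(X)$ is $(TJ)(x)=\inf_{u\in U(x)}\{g(x,u)+J(f(x,u))\}$; $T^k$ is its $k$-fold composition, with $T^0J=J$. The region of decreasing is $\mathcal{D}(X)=\{J\in\mathcal{E}^+(X): (TJ)(x)\le J(x)\ \forall x\in X\}$. Standing assumption: for every $J\in\mathcal{E}^+(X)$ and every $x\in X$, the infimum defining $(TJ)(x)$ is attained. *)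

theory Defs
  imports "HOL-Library.Extended_Nonnegative_Real"
begin

definition bellman :: "('x \<Rightarrow> 'u set) \<Rightarrow> ('x \<Rightarrow> 'u \<Rightarrow> 'x) \<Rightarrow> ('x \<Rightarrow> 'u \<Rightarrow> ennreal)
    \<Rightarrow> ('x \<Rightarrow> ennreal) \<Rightarrow> ('x \<Rightarrow> ennreal)" where
  "bellman U f g J = (\<lambda>x. INF u\<in>U x. g x u + J (f x u))"

definition decr_region :: "('x \<Rightarrow> 'u set) \<Rightarrow> ('x \<Rightarrow> 'u \<Rightarrow> 'x) \<Rightarrow> ('x \<Rightarrow> 'u \<Rightarrow> ennreal)
    \<Rightarrow> ('x \<Rightarrow> ennreal) set" where
  "decr_region U f g = {J. \<forall>x. bellman U f g J x \<le> J x}"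

end

theory Submission
  imports Defs
begin

text \<open>The Bellman operator is monotone. Hence the region of decreasing is invariant under it
  (from \<open>T J \<le> J\<close> follows \<open>T (T J) \<le> T J\<close>) and closed under finite pointwise minima
  (\<open>T (min\<^sub>i J\<^sub>i) \<le> T J\<^sub>i \<le> J\<^sub>i\<close> for every \<open>i\<close>).\<close>

lemma bellman_mono:
  assumes "K \<le> K'"
  shows "bellman U f g K \<le> bellman U f g K'"
  unfolding bellman_def le_fun_def
proof (intro allI INF_mono bexI)
  show "g x u + K (f x u) \<le> g x u + K' (f x u)" for x u
    using assms by (simp add: add_left_mono le_funD)
qed

lemma bellman_mem_decr_region:
  assumes "J \<in> decr_region U f g"
  shows "bellman U f g J \<in> decr_region U f g"
proof -
  have "bellman U f g J \<le> J"
    using assms unfolding decr_region_def by (simp add: le_fun_def)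
  then show ?thesis
    unfolding decr_region_def by (auto dest: bellman_mono[THEN le_funD])
qed

lemma bellman_funpow_mem_decr_region:
  assumes "J \<in> decr_region U f g"
  shows "(bellman U f g ^^ n) J \<in> decr_region U f g"
  by (induction n) (simp_all add: assms bellman_mem_decr_region)

lemma Min_mem_decr_region:
  assumes "finite I" and "I \<noteq> {}"
    and "\<And>i. i \<in> I \<Longrightarrow> K i \<in> decr_region U f g"
  shows "(\<lambda>x. Min ((\<lambda>i. K i x) ` I)) \<in> decr_region U f g"
  unfolding decr_region_def
proof (intro CollectI allI Min.boundedI)
  fix x and a assume "a \<in> (\<lambda>i. K i x) ` I"
  then obtain i where i: "i \<in> I" and a: "a = K i x" by blast
  have "(\<lambda>y. Min ((\<lambda>i. K i y) ` I)) \<le> K i"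
    using assms(1) i by (simp add: le_fun_def)
  then have "bellman U f g (\<lambda>y. Min ((\<lambda>i. K i y) ` I)) x \<le> bellman U f g (K i) x"
    by (rule bellman_mono[THEN le_funD])
  also have "\<dots> \<le> K i x"
    using assms(3)[OF i] unfolding decr_region_def by blast
  finally show "bellman U f g (\<lambda>y. Min ((\<lambda>i. K i y) ` I)) x \<le> a"
    using a by simp
qed (use assms(1,2) in simp_all)

theorem corollary2:
  fixes U :: "'x \<Rightarrow> 'u set" and f :: "'x \<Rightarrow> 'u \<Rightarrow> 'x" and g :: "'x \<Rightarrow> 'u \<Rightarrow> ennreal"
    and p :: nat and J :: "nat \<Rightarrow> 'x \<Rightarrow> ennreal" and l :: "nat \<Rightarrow> nat"
  assumes U_ne: "\<And>x. U x \<noteq> {}"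
    and attained: "\<And>(K :: 'x \<Rightarrow> ennreal) x. \<exists>u\<in>U x. bellman U f g K x = g x u + K (f x u)"
    and p_pos: "p \<ge> 1"
    and J_decr: "\<And>i. i \<in> {1..p} \<Longrightarrow> J i \<in> decr_region U f g"
    and l_pos: "\<And>i. i \<in> {1..p} \<Longrightarrow> l i \<ge> 1"
  shows "(\<lambda>x. Min ((\<lambda>i. ((bellman U f g) ^^ (l i - Min (l ` {1..p}))) (J i) x) ` {1..p}))
           \<in> decr_region U f g"
proof (rule Min_mem_decr_region)
  show "{1..p} \<noteq> {}"
    using p_pos by simp
  show "((bellman U f g) ^^ (l i - Min (l ` {1..p}))) (J i) \<in> decr_region U f g"
    if "i \<in> {1..p}" for i
    using J_decr[OF that] by (rule bellman_funpow_mem_decr_region)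
qed simp

end
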